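(* Let $n\ge 2$ and $p>0$. Writing $x=(x',x_n)$ with $x'\in\mathbb R^{n-1}$, let $$\Omega_1=\{(x',x_n): |x'|<1,\ 0<x_n<(1-|x'|^2)^{\frac{n}{n+p-2}}\},\qquad w(x)=\tfrac12\Big[x_n-x_n^{\frac{2}{n+p}}(1-|x'|^2)^{\frac{n}{n+p}}\Big].$$ Then $w$ is smooth in $\Omega_1$, $w<0$ in $\Omega_1$, $w=0$ on $\partial\Omega_1$, and the (pointwise) Hessian determinant satisfies $\det D^2w\le|w|^{-p}$ in $\Omega_1$. (Here $w$ need not be convex.) *)

theory Defs
  imports "HOL-Analysis.Analysis"
begin

definition partial :: "'n::finite \<Rightarrow> (real^'n \<Rightarrow> real) \<Rightarrow> real^'n \<Rightarrow> real" where
  "partial i f x = deriv (\<lambda>t. f (x + t *\<^sub>R axis i 1)) 0"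

fun iter_partial :: "'n::finite list \<Rightarrow> (real^'n \<Rightarrow> real) \<Rightarrow> real^'n \<Rightarrow> real" where
  "iter_partial [] f = f"
| "iter_partial (i # is) f = partial i (iter_partial is f)"

definition smooth_on :: "(real^'n::finite) set \<Rightarrow> (real^'n \<Rightarrow> real) \<Rightarrow> bool" where
  "smooth_on S f \<longleftrightarrow>
     (\<forall>is. continuous_on S (iter_partial is f) \<and>
        (\<forall>i. \<forall>x\<in>S. (\<lambda>t. iter_partial is f (x + t *\<^sub>R axis i 1)) differentiable (at 0)))"

definition hessian :: "(real^'n::finite \<Rightarrow> real) \<Rightarrow> real^'n \<Rightarrow> real^'n^'n" where
  "hessian f x = (\<chi> i j. partial i (partial j f) x)"

text \<open>Splitting x = (x', x_n) for x in real^('m + unit), n = CARD('m) + 1.\<close>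
definition xprime :: "real^('m::finite + unit) \<Rightarrow> real^'m" where
  "xprime x = (\<chi> i. x $ Inl i)"

definition xlast :: "real^('m::finite + unit) \<Rightarrow> real" where
  "xlast x = x $ Inr ()"

end

theory Submission
  imports Defs
begin

text \<open>Write \<open>s = x\<^sub>n\<close>, \<open>A = 1 - |x'|^2\<close>, \<open>q = 2/(n+p)\<close>, \<open>r = n/(n+p)\<close> and
  \<open>e = n/(n+p-2)\<close>, so that \<open>w = (s - s^q A^r)/2\<close>. Since \<open>e(1-q) = r\<close>, the inequality
  \<open>s < s^q A^r\<close> is equivalent to \<open>s < A^e\<close>, with equality on the graph \<open>s = A^e\<close>; this gives the
  sign of \<open>w\<close> and its boundary values. Finite sums of terms \<open>c s^a A^b x'^k\<close> are closed under
  partial differentiation, which gives smoothness and an explicit Hessian of the bordered form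
  \<open>[[l I + g x' x'^T, b x'], [b x'^T, a]]\<close>. Its determinant is \<open>r^(n-1) q E s^(qn-2) A^((r-1)n)\<close>
  with \<open>E = A(1-q)/2 + (1-A)(1-q-r) \<le> 3(1-q)/2\<close>. As \<open>q(1-q) \<le> 1/4\<close> the prefactor is at
  most \<open>1\<close>, and the powers combine to \<open>(s^q A^r)^(-p) \<le> |w|^(-p)\<close>.\<close>

definition one_minus_norm2 :: "real^('m::finite+unit) \<Rightarrow> real" where
  "one_minus_norm2 x = 1 - (\<Sum>i\<in>UNIV. (x $ Inl i)^2)"

lemma one_minus_norm2_eq: "one_minus_norm2 x = 1 - norm (xprime x)^2"
  unfolding one_minus_norm2_def power2_norm_eq_inner inner_vec_def xprime_def
  by (simp add: power2_eq_square)

lemma norm_xprime_less_one_iff: "norm (xprime x) < 1 \<longleftrightarrow> 0 < one_minus_norm2 x"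
  by (metis one_minus_norm2_eq abs_norm_cancel abs_square_less_1 diff_gt_0_iff_gt)

lemma one_minus_norm2_le_one: "one_minus_norm2 x \<le> 1"
  by (simp add: one_minus_norm2_def sum_nonneg)

lemma sum_sq_Inl: "(\<Sum>i\<in>UNIV. (x $ Inl i)^2) = 1 - one_minus_norm2 x"
  by (simp add: one_minus_norm2_def)

type_synonym 'm power_term = "real \<times> real \<times> real \<times> ('m \<Rightarrow> nat)"

definition coord_monomial :: "('m::finite \<Rightarrow> nat) \<Rightarrow> real^('m+unit) \<Rightarrow> real" where
  "coord_monomial k x = (\<Prod>i\<in>UNIV. (x $ Inl i) ^ k i)"

fun eval_term :: "'m::finite power_term \<Rightarrow> real^('m+unit) \<Rightarrow> real" where
  "eval_term (c, a, b, k) x = c * (x $ Inr ()) powr a * one_minus_norm2 x powr b * coord_monomial k x"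

text \<open>For \<open>k j = 0\<close> the truncated exponent \<open>k j - 1\<close> is harmless: that term has coefficient \<open>0\<close>.\<close>

fun partial_term :: "('m::finite+unit) \<Rightarrow> 'm power_term \<Rightarrow> 'm power_term list" where
  "partial_term (Inr u) (c, a, b, k) = [(c*a, a-1, b, k)]"
| "partial_term (Inl j) (c, a, b, k) =
     [(-2*c*b, a, b-1, k(j := k j + 1)), (c * real (k j), a, b, k(j := k j - 1))]"

definition eval_terms :: "'m::finite power_term list \<Rightarrow> real^('m+unit) \<Rightarrow> real" where
  "eval_terms L x = (\<Sum>T\<leftarrow>L. eval_term T x)"

definition partial_terms :: "('m::finite+unit) \<Rightarrow> 'm power_term list \<Rightarrow> 'm power_term list" where
  "partial_terms d L = concat (map (partial_term d) L)"

lemma eval_terms_simps [simp]: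
  "eval_terms [] x = 0"
  "eval_terms (T # L) x = eval_term T x + eval_terms L x"
  "eval_terms (L1 @ L2) x = eval_terms L1 x + eval_terms L2 x"
  by (simp_all add: eval_terms_def)

lemma partial_terms_simps [simp]:
  "partial_terms d [] = []"
  "partial_terms d (T # L) = partial_term d T @ partial_terms d L"
  by (simp_all add: partial_terms_def)

definition half_cylinder :: "(real^('m::finite+unit)) set" where
  "half_cylinder = {x. 0 < x $ Inr () \<and> 0 < one_minus_norm2 x}"

lemma open_half_cylinder: "open half_cylinder"
  unfolding half_cylinder_def one_minus_norm2_def
  by (intro open_Collect_conj open_Collect_less continuous_intros)

lemma axis_one_nth [simp]: "axis d (1::real) $ l = (if l = d then 1 else 0)"
  by (simp add: axis_def)

lemma coord_monomial_remove:
  "coord_monomial k x = (x $ Inl j)^(k j) * (\<Prod>i\<in>UNIV-{j}. (x $ Inl i)^k i)"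
  unfolding coord_monomial_def by (simp add: prod.remove)

lemma coord_monomial_upd:
  "coord_monomial (k(j := m)) x = (x $ Inl j)^m * (\<Prod>i\<in>UNIV-{j}. (x $ Inl i)^k i)"
  unfolding coord_monomial_remove[of _ _ j] by (auto intro!: arg_cong2[where f="(*)"] prod.cong)

lemma coord_monomial_zero [simp]: "coord_monomial (\<lambda>_. 0) x = 1"
  by (simp add: coord_monomial_def)

lemma coord_monomial_single: "coord_monomial ((\<lambda>_. 0)(j := m)) x = (x $ Inl j)^m"
  by (simp add: coord_monomial_upd)

lemma coord_monomial_pair:
  assumes "i \<noteq> j"
  shows "coord_monomial ((\<lambda>_. 0)(j := Suc 0, i := Suc 0)) x = x $ Inl i * x $ Inl j"
proof -
  have "(\<Prod>l\<in>UNIV-{i}. (x $ Inl l) ^ ((\<lambda>_. 0)(j := Suc 0)) l) =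
          (\<Prod>l\<in>UNIV-{i}. if l = j then x $ Inl j else 1)"
    by (rule prod.cong) auto
  also have "\<dots> = x $ Inl j" using assms by (simp add: prod.delta)
  finally show ?thesis by (simp add: coord_monomial_upd)
qed

lemma one_minus_norm2_remove:
  "one_minus_norm2 x = 1 - ((x $ Inl j)^2 + (\<Sum>i\<in>UNIV-{j}. (x $ Inl i)^2))"
  unfolding one_minus_norm2_def by (simp add: sum.remove)

lemma coord_monomial_shift_Inl:
  "coord_monomial k (x + t *\<^sub>R axis (Inl j) 1) =
     (x $ Inl j + t)^(k j) * (\<Prod>i\<in>UNIV-{j}. (x $ Inl i)^k i)"
  unfolding coord_monomial_remove[of _ _ j] by (auto intro!: arg_cong2[where f="(*)"] prod.cong)

lemma one_minus_norm2_shift_Inl: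
  "one_minus_norm2 (x + t *\<^sub>R axis (Inl j) 1) =
     1 - ((x $ Inl j + t)^2 + (\<Sum>i\<in>UNIV-{j}. (x $ Inl i)^2))"
  unfolding one_minus_norm2_remove[of _ j] by (auto intro!: sum.cong)

lemma eval_term_has_derivative:
  assumes x: "x \<in> half_cylinder"
  shows "((\<lambda>t. eval_term T (x + t *\<^sub>R axis d 1)) has_real_derivative
           eval_terms (partial_term d T) x) (at 0)"
proof -
  obtain c a b k where T: "T = (c, a, b, k)" by (cases T) auto
  have s: "0 < x $ Inr ()" and A: "0 < one_minus_norm2 x" using x by (auto simp: half_cylinder_def)
  show ?thesis
  proof (cases d)
    case (Inr u)
    have "((\<lambda>t. c * (x $ Inr () + t) powr a * one_minus_norm2 x powr b * coord_monomial k x)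
           has_real_derivative
           c * (a * (x $ Inr ()) powr (a - 1)) * one_minus_norm2 x powr b * coord_monomial k x) (at 0)"
      using s by (auto intro!: derivative_eq_intros)
    then show ?thesis
      by (simp add: T Inr coord_monomial_def one_minus_norm2_def algebra_simps)
  next
    case (Inl j)
    let ?P = "\<Prod>i\<in>UNIV-{j}. (x $ Inl i)^k i"
    let ?S = "\<Sum>i\<in>UNIV-{j}. (x $ Inl i)^2"
    let ?y = "x $ Inl j"
    have A': "0 < 1 - (?y^2 + ?S)" using A by (simp add: one_minus_norm2_remove[of _ j])
    have "((\<lambda>t. c * (x $ Inr ()) powr a * (1 - ((?y + t)^2 + ?S)) powr b * ((?y + t)^(k j) * ?P))
           has_real_derivative
           c * (x $ Inr ()) powr a * (b * (1 - (?y^2 + ?S)) powr (b - 1) * (- (2 * ?y))) * (?y^(k j) * ?P)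
           + c * (x $ Inr ()) powr a * (1 - (?y^2 + ?S)) powr b * (real (k j) * ?y^(k j - 1) * ?P)) (at 0)"
      using A' by (auto intro!: derivative_eq_intros)
    then show ?thesis
      by (simp add: T Inl coord_monomial_shift_Inl one_minus_norm2_shift_Inl coord_monomial_upd
          one_minus_norm2_remove[of _ j, symmetric] algebra_simps)
  qed
qed

lemma eval_terms_has_derivative:
  assumes "x \<in> half_cylinder"
  shows "((\<lambda>t. eval_terms L (x + t *\<^sub>R axis d 1)) has_real_derivative
           eval_terms (partial_terms d L) x) (at 0)"
  by (induction L) (simp_all del: eval_term.simps add: DERIV_add eval_term_has_derivative[OF assms])

lemma continuous_on_eval_terms: "continuous_on half_cylinder (eval_terms L)"
proof (induction L)
  case (Cons T L)
  obtain c a b k where T: "T = (c, a, b, k)" by (cases T) auto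
  have "continuous_on half_cylinder (eval_term T)"
    unfolding T eval_term.simps one_minus_norm2_def coord_monomial_def
    by (intro continuous_intros) (auto simp: half_cylinder_def one_minus_norm2_def)
  with Cons show ?case by (simp add: continuous_on_add del: eval_term.simps)
qed simp

lemma eventually_line_in_open:
  fixes S :: "'a::real_normed_vector set"
  assumes "open S" "x \<in> S"
  shows "\<forall>\<^sub>F t in nhds (0::real). x + t *\<^sub>R v \<in> S"
proof -
  have "((\<lambda>t. x + t *\<^sub>R v) \<longlongrightarrow> x + 0 *\<^sub>R v) (nhds (0::real))"
    by (intro tendsto_intros filterlim_ident)
  then show ?thesis using assms by (intro topological_tendstoD) auto
qed

lemma partial_cong_open:
  assumes "open S" "x \<in> S" "\<And>y. y \<in> S \<Longrightarrow> f y = g y"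
  shows "partial i f x = partial i g x"
  unfolding partial_def
  by (rule deriv_cong_ev[OF _ refl])
     (use eventually_line_in_open[OF assms(1,2), of "axis i 1"] assms(3) in \<open>auto elim: eventually_mono\<close>)

lemma iter_partial_eval_terms:
  assumes "\<And>y. y \<in> half_cylinder \<Longrightarrow> W y = eval_terms L y" and "x \<in> half_cylinder"
  shows "iter_partial is W x = eval_terms (foldr partial_terms is L) x"
  using assms(2)
proof (induction "is" arbitrary: x)
  case (Cons i "is")
  have "iter_partial (i # is) W x = partial i (eval_terms (foldr partial_terms is L)) x"
    using partial_cong_open[OF open_half_cylinder Cons.prems Cons.IH] by simp
  also have "\<dots> = eval_terms (foldr partial_terms (i # is) L) x"
    unfolding partial_def using eval_terms_has_derivative[OF Cons.prems] by (simp add: DERIV_imp_deriv)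
  finally show ?case .
qed (simp add: assms(1))

lemma hessian_eval_terms:
  assumes "\<And>y. y \<in> half_cylinder \<Longrightarrow> W y = eval_terms L y" "x \<in> half_cylinder"
  shows "hessian W x $ i $ j = eval_terms (partial_terms i (partial_terms j L)) x"
  using iter_partial_eval_terms[OF assms, of "[i, j]"] by (simp add: hessian_def)

lemma smooth_on_eval_terms:
  assumes W: "\<And>y. y \<in> half_cylinder \<Longrightarrow> W y = eval_terms L y"
    and S: "S \<subseteq> half_cylinder" "open S"
  shows "smooth_on S W"
  unfolding smooth_on_def
proof (intro allI conjI ballI)
  fix "is"
  have "continuous_on S (eval_terms (foldr partial_terms is L))"
    using continuous_on_subset[OF continuous_on_eval_terms S(1)] .
  then show "continuous_on S (iter_partial is W)"
    by (rule continuous_on_cong[THEN iffD1, OF refl, rotated])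
       (use S(1) iter_partial_eval_terms[OF W] in auto)
  fix i x assume "x \<in> S"
  then have x: "x \<in> half_cylinder" using S(1) by blast
  have "\<forall>\<^sub>F t in nhds 0. iter_partial is W (x + t *\<^sub>R axis i 1) =
          eval_terms (foldr partial_terms is L) (x + t *\<^sub>R axis i 1)"
    using eventually_line_in_open[OF S(2) \<open>x \<in> S\<close>, of "axis i 1"] S(1) iter_partial_eval_terms[OF W]
    by (auto elim!: eventually_mono)
  then have "((\<lambda>t. iter_partial is W (x + t *\<^sub>R axis i 1)) has_real_derivative
               eval_terms (partial_terms i (foldr partial_terms is L)) x) (at 0)"
    using eval_terms_has_derivative[OF x] by (subst DERIV_cong_ev[OF refl _ refl])
  then show "(\<lambda>t. iter_partial is W (x + t *\<^sub>R axis i 1)) differentiable (at 0)"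
    unfolding has_field_derivative_def by (rule differentiableI)
qed

lemma det_diagonal_except_column:
  fixes A :: "'a::comm_ring_1^'n::finite^'n"
  assumes offdiag: "\<And>i j. i \<noteq> j \<Longrightarrow> j \<noteq> c \<Longrightarrow> A$i$j = 0"
  shows "det A = (\<Prod>i\<in>UNIV. A$i$i)"
proof -
  let ?PU = "{p. p permutes (UNIV :: 'n set)}"
  let ?pp = "\<lambda>p. of_int (sign p) * (\<Prod>i\<in>UNIV. A$i$p i)"
  have "?pp p = 0" if p: "p \<in> ?PU - {id}" for p
  proof -
    obtain i where i: "p i \<noteq> i" using p by fastforce
    have "\<exists>i \<in> UNIV. A$i$p i = 0"
    proof (cases "p i = c")
      case True
      have "inj p" using p permutes_inj by blast
      then have "p c \<noteq> c" using i True by (metis injD)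
      then show ?thesis using offdiag[of c "p c"] by (intro bexI[of _ c]) auto
    qed (use offdiag[of i "p i"] i in auto)
    then show ?thesis using prod_zero[OF finite_class.finite_UNIV] by force
  qed
  then show ?thesis
    using sum.mono_neutral_cong_left[OF finite_permutations[OF finite_class.finite_UNIV], of "{id}" ?pp ?pp]
    unfolding det_def by (simp add: sign_id permutes_id)
qed

definition shear_matrix :: "'a::comm_ring_1^'n \<Rightarrow> 'n \<Rightarrow> 'a^'n^'n" where
  "shear_matrix u c = (\<chi> i j. (if i = j then 1 else 0) - (if j = c then u$i else 0))"

lemma det_shear_matrix:
  fixes u :: "'a::comm_ring_1^'n::finite"
  assumes "u$c = 0"
  shows "det (shear_matrix u c) = 1"
proof -
  have "det (shear_matrix u c) = (\<Prod>i\<in>UNIV. shear_matrix u c $ i $ i)"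
    by (rule det_diagonal_except_column[where c=c]) (simp add: shear_matrix_def)
  also have "\<dots> = 1" using assms by (auto simp: shear_matrix_def intro!: prod.neutral)
  finally show ?thesis .
qed

lemma shear_matrix_mult:
  fixes M :: "'a::comm_ring_1^'m^'n::finite"
  shows "(shear_matrix u c ** M) $ i $ j = M$i$j - u$i * M$c$j"
proof -
  have "(shear_matrix u c ** M) $ i $ j =
          (\<Sum>k\<in>UNIV. (if i = k then M$k$j else 0) - (if k = c then u$i * M$k$j else 0))"
    by (auto simp: shear_matrix_def matrix_matrix_mult_def left_diff_distrib intro!: sum.cong)
  then show ?thesis by (simp add: sum_subtractf)
qed

lemma transpose_shear_matrix_mult:
  fixes M :: "'a::comm_ring_1^'m^'n::finite"
  shows "(transpose (shear_matrix u c) ** M) $ i $ j =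
           M$i$j - (if i = c then \<Sum>k\<in>UNIV. u$k * M$k$j else 0)"
proof -
  have "(transpose (shear_matrix u c) ** M) $ i $ j =
          (\<Sum>k\<in>UNIV. (if k = i then M$k$j else 0) - (if i = c then u$k * M$k$j else 0))"
    by (auto simp: shear_matrix_def transpose_def matrix_matrix_mult_def left_diff_distrib
        intro!: sum.cong)
  then show ?thesis by (simp add: sum_subtractf)
qed

lemma sum_UNIV_Plus_unit:
  "(\<Sum>k\<in>(UNIV::('a::finite + unit) set). f k) = (\<Sum>i\<in>UNIV. f (Inl i)) + f (Inr ())"
  by (subst UNIV_Plus_UNIV[symmetric], subst sum.Plus) (auto simp: UNIV_unit)

lemma prod_UNIV_Plus_unit:
  "(\<Prod>k\<in>(UNIV::('a::finite + unit) set). f k) = (\<Prod>i\<in>UNIV. f (Inl i)) * f (Inr ())"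
  by (subst UNIV_Plus_UNIV[symmetric], subst prod.Plus) (auto simp: UNIV_unit)

text \<open>Two shears clear first the rank-one block and then the bottom row, leaving a matrix that
  is diagonal apart from its last column.\<close>

lemma det_bordered_rank_one:
  fixes H :: "'a::field^('m::finite+unit)^('m+unit)" and y :: "'m \<Rightarrow> 'a"
  assumes corner: "H $ Inr () $ Inr () = a"
    and border_row: "\<And>j. H $ Inr () $ Inl j = b * y j"
    and border_col: "\<And>i. H $ Inl i $ Inr () = b * y i"
    and block: "\<And>i j. H $ Inl i $ Inl j = g * y i * y j + (if i = j then l else 0)"
    and "b \<noteq> 0" "l \<noteq> 0"
  shows "det H = l ^ CARD('m) * (a - (b^2 - g*a) * (\<Sum>i\<in>UNIV. y i ^ 2) / l)"
proof -
  define Y :: "'a^('m+unit)" where "Y = (\<chi> k. case k of Inl i \<Rightarrow> y i | Inr _ \<Rightarrow> 0)"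
  define F where "F = shear_matrix ((g/b) *s Y) (Inr ()) ** H"
  define K where "K = transpose (shear_matrix ((b/l) *s Y) (Inr ())) ** F"
  have Y: "Y $ Inl i = y i" "Y $ Inr () = 0" for i by (simp_all add: Y_def)
  have F_block: "F $ Inl i $ Inl j = (if i = j then l else 0)" for i j
    using \<open>b \<noteq> 0\<close> by (simp add: F_def shear_matrix_mult Y block border_row)
  have F_col: "F $ Inl i $ Inr () = (b - g*a/b) * y i" for i
    using \<open>b \<noteq> 0\<close> by (simp add: F_def shear_matrix_mult Y border_col corner algebra_simps)
  have F_row: "F $ Inr () $ j = H $ Inr () $ j" for j
    by (simp add: F_def shear_matrix_mult Y)
  have K_Inl: "K $ Inl i $ j = F $ Inl i $ j" for i j
    by (simp add: K_def transpose_shear_matrix_mult)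
  have K_row: "K $ Inr () $ Inl j = 0" for j
    using \<open>l \<noteq> 0\<close>
    by (simp add: K_def transpose_shear_matrix_mult sum_UNIV_Plus_unit Y F_block F_row border_row
        if_distrib[of "\<lambda>z. _ * z"] sum_divide_distrib[symmetric] cong: if_cong)
  have "(\<Sum>k\<in>UNIV. ((b/l) *s Y) $ k * F $ k $ Inr ()) = (b/l) * (b - g*a/b) * (\<Sum>i\<in>UNIV. y i ^ 2)"
    by (simp add: sum_UNIV_Plus_unit Y F_col sum_distrib_left sum_divide_distrib power2_eq_square mult_ac)
  then have "K $ Inr () $ Inr () = a - (b/l) * (b - g*a/b) * (\<Sum>i\<in>UNIV. y i ^ 2)"
    unfolding K_def transpose_shear_matrix_mult F_row corner by (simp only: simp_thms if_True)
  also have "\<dots> = a - (b^2 - g*a) * (\<Sum>i\<in>UNIV. y i ^ 2) / l"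
    using \<open>b \<noteq> 0\<close> \<open>l \<noteq> 0\<close> by (simp add: field_simps power2_eq_square)
  finally have K_corner: "K $ Inr () $ Inr () = a - (b^2 - g*a) * (\<Sum>i\<in>UNIV. y i ^ 2) / l" .
  have "det K = (\<Prod>k\<in>UNIV. K $ k $ k)"
  proof (rule det_diagonal_except_column[where c="Inr ()"])
    fix k j :: "'m + unit" assume "k \<noteq> j" "j \<noteq> Inr ()"
    then show "K $ k $ j = 0"
      by (cases k; cases j) (auto simp: K_Inl F_block K_row)
  qed
  also have "\<dots> = l ^ CARD('m) * K $ Inr () $ Inr ()"
    by (simp add: prod_UNIV_Plus_unit K_Inl F_block)
  finally have "det K = l ^ CARD('m) * K $ Inr () $ Inr ()" .
  moreover have "det K = det H"
    by (simp add: K_def F_def det_mul det_shear_matrix Y)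
  ultimately show ?thesis by (simp add: K_corner)
qed

definition profile :: "real \<Rightarrow> real \<Rightarrow> real^('m::finite+unit) \<Rightarrow> real" where
  "profile q r x = x $ Inr () powr q * one_minus_norm2 x powr r"

definition comparison :: "real \<Rightarrow> real \<Rightarrow> real^('m::finite+unit) \<Rightarrow> real" where
  "comparison q r x = (x $ Inr () - profile q r x) / 2"

definition domain_below :: "real \<Rightarrow> (real^('m::finite+unit)) set" where
  "domain_below e = {x \<in> half_cylinder. x $ Inr () < one_minus_norm2 x powr e}"

lemma comparison_eq_eval_terms:
  assumes "x \<in> half_cylinder"
  shows "comparison q r x = eval_terms [(1/2, 1, 0, \<lambda>_. 0), (-1/2, q, r, \<lambda>_. 0)] x"
  using assms by (simp add: comparison_def profile_def half_cylinder_def)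

lemma smooth_on_comparison:
  assumes "S \<subseteq> half_cylinder" "open S"
  shows "smooth_on S (comparison q r)"
  by (rule smooth_on_eval_terms[OF comparison_eq_eval_terms assms])

lemma hessian_comparison:
  fixes x :: "real^('m::finite+unit)"
  assumes x: "x \<in> half_cylinder"
  defines "s \<equiv> x $ Inr ()" and "A \<equiv> one_minus_norm2 x"
  shows "hessian (comparison q r) x $ Inr () $ Inr () = -1/2*q*(q-1) * s powr (q-2) * A powr r"
    and "hessian (comparison q r) x $ Inr () $ Inl j = q*r * s powr (q-1) * A powr (r-1) * x $ Inl j"
    and "hessian (comparison q r) x $ Inl i $ Inr () = q*r * s powr (q-1) * A powr (r-1) * x $ Inl i"
    and "hessian (comparison q r) x $ Inl i $ Inl j =
           -2*r*(r-1) * s powr q * A powr (r-2) * x $ Inl i * x $ Inl j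
           + (if i = j then r * s powr q * A powr (r-1) else 0)"
proof -
  have pos: "0 < s" "0 < A" using x by (auto simp: s_def A_def half_cylinder_def)
  note H = hessian_eval_terms[OF comparison_eq_eval_terms x]
  show "hessian (comparison q r) x $ Inr () $ Inr () = -1/2*q*(q-1) * s powr (q-2) * A powr r"
    using pos by (simp add: H s_def A_def algebra_simps)
  show "hessian (comparison q r) x $ Inr () $ Inl j = q*r * s powr (q-1) * A powr (r-1) * x $ Inl j"
    using pos by (simp add: H s_def A_def coord_monomial_single algebra_simps)
  show "hessian (comparison q r) x $ Inl i $ Inr () = q*r * s powr (q-1) * A powr (r-1) * x $ Inl i"
    using pos by (simp add: H s_def A_def coord_monomial_single algebra_simps)
  show "hessian (comparison q r) x $ Inl i $ Inl j =
           -2*r*(r-1) * s powr q * A powr (r-2) * x $ Inl i * x $ Inl j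
           + (if i = j then r * s powr q * A powr (r-1) else 0)"
  proof (cases "i = j")
    case True
    then show ?thesis
      using pos by (simp add: H s_def A_def coord_monomial_single algebra_simps power2_eq_square)
  next
    case False
    then show ?thesis
      using pos by (simp add: H s_def A_def coord_monomial_single coord_monomial_pair algebra_simps)
  qed
qed

lemma det_hessian_comparison:
  fixes x :: "real^('m::finite+unit)"
  assumes x: "x \<in> half_cylinder" and "q \<noteq> 0" "r \<noteq> 0"
  defines "s \<equiv> x $ Inr ()" and "A \<equiv> one_minus_norm2 x"
  defines "S \<equiv> s powr q" and "T \<equiv> A powr r" and "m \<equiv> CARD('m)"
  shows "det (hessian (comparison q r) x) =
           r^m * q * (A*(1-q)/2 + (1-A)*(1-q-r)) * (S^(m+1) / s^2) * (T^(m+1) / A^(m+1))"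
proof -
  have pos: "0 < s" "0 < A" using x by (auto simp: s_def A_def half_cylinder_def)
  then have "0 < S" "0 < T" by (simp_all add: S_def T_def)
  have powr_shift: "s powr (q-1) = S/s" "s powr (q-2) = S/s^2" "A powr (r-1) = T/A" "A powr (r-2) = T/A^2"
    using pos by (simp_all add: S_def T_def powr_diff)
  let ?l = "r*S*(T/A)" and ?b = "q*r*(S/s)*(T/A)" and ?g = "-2*r*(r-1)*S*(T/A^2)"
    and ?a = "-1/2*q*(q-1)*(S/s^2)*T"
  have "det (hessian (comparison q r) x) =
          ?l^m * (?a - (?b^2 - ?g*?a) * (\<Sum>i\<in>UNIV. (x $ Inl i)^2) / ?l)"
    unfolding m_def by (rule det_bordered_rank_one)
       (use pos \<open>0 < S\<close> \<open>0 < T\<close> \<open>q \<noteq> 0\<close> \<open>r \<noteq> 0\<close> in \<open>simp_all add: hessian_comparison[OF x] powr_shift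
         flip: s_def A_def S_def T_def\<close>)
  also have "\<dots> = ?l^m * (?a - (?b^2 - ?g*?a) * (1 - A) / ?l)"
    by (simp add: sum_sq_Inl A_def)
  also have "\<dots> = r^m * q * (A*(1-q)/2 + (1-A)*(1-q-r)) * (S^(m+1) / s^2) * (T^(m+1) / A^(m+1))"
    using pos \<open>r \<noteq> 0\<close> by (simp add: S_def T_def power_mult_distrib power_divide field_simps power2_eq_square)
  finally show ?thesis .
qed

lemma hessian_factor_le_one:
  fixes q r A :: real
  assumes q: "0 < q" "q < 1" and r: "0 < r" "r < 1" and A: "0 < A" "A \<le> 1"
  shows "r^m * q * (A*(1-q)/2 + (1-A)*(1-q-r)) \<le> 1"
proof -
  let ?E = "A*(1-q)/2 + (1-A)*(1-q-r)"
  have "A*(1-q)/2 \<le> (1-q)/2" using A q by (simp add: mult_left_le_one_le)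
  moreover have "(1-A)*(1-q-r) \<le> 1-q"
  proof -
    have "(1-A)*(1-q-r) \<le> (1-A)*(1-q)" using A r by (intro mult_left_mono) auto
    also have "\<dots> \<le> 1-q" using A q by (intro mult_left_le_one_le) auto
    finally show ?thesis .
  qed
  ultimately have "?E \<le> (1-q)/2 + (1-q)" by (rule add_mono)
  then have "q * ?E \<le> q * ((1-q)/2 + (1-q))" using q by (intro mult_left_mono) auto
  also have "\<dots> = 3/2 * (q * (1-q))" by (simp add: field_simps)
  also have "\<dots> \<le> 3/2 * (1/4)"
    using zero_le_power2[of "q - 1/2"] by (simp add: power2_eq_square field_simps)
  finally have "q * ?E \<le> 1" by simp
  moreover have "0 \<le> r^m" "r^m \<le> 1" using r by (simp_all add: power_le_one)
  ultimately have "q * ?E * r^m \<le> 1" by (rule mult_le_one)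
  then show ?thesis by (simp add: mult_ac)
qed

lemma powr_power_divide:
  fixes s :: real
  assumes "0 < s"
  shows "(s powr q)^k / s^j = s powr (q * k - j)"
  using assms by (simp add: powr_diff powr_powr powr_realpow[symmetric] mult.commute)

lemma profile_powr_le_abs_comparison_powr:
  assumes "x \<in> half_cylinder" "comparison q r x < 0" "0 \<le> p"
  shows "profile q r x powr (-p) \<le> \<bar>comparison q r x\<bar> powr (-p)"
proof (rule powr_mono2')
  have "0 < x $ Inr ()" using assms(1) by (simp add: half_cylinder_def)
  then show "\<bar>comparison q r x\<bar> \<le> profile q r x" using assms(2) by (simp add: comparison_def)
qed (use assms in auto)

lemma det_hessian_comparison_le:
  fixes x :: "real^('m::finite+unit)" and p :: real
  assumes x: "x \<in> half_cylinder" and "0 < p"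
  defines "n \<equiv> real CARD('m + unit)"
  defines "q \<equiv> 2/(n+p)" and "r \<equiv> n/(n+p)"
  assumes "comparison q r x < 0"
  shows "det (hessian (comparison q r) x) \<le> \<bar>comparison q r x\<bar> powr (-p)"
proof -
  define m s A where "m = CARD('m)" and "s = x $ Inr ()" and "A = one_minus_norm2 x"
  have pos: "0 < s" "0 < A" using x by (auto simp: s_def A_def half_cylinder_def)
  have "n \<ge> 2" by (simp add: n_def)
  then have q: "0 < q" "q < 1" and r: "0 < r" "r < 1"
    using \<open>0 < p\<close> by (auto simp: q_def r_def field_simps)
  have "real (m+1) = n" by (simp add: n_def m_def)
  then have "q * real (m+1) - real 2 = -q*p" "r * real (m+1) - real (m+1) = -r*p"
    using \<open>n \<ge> 2\<close> \<open>0 < p\<close> by (simp_all add: q_def r_def field_simps)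
  note s_factor = powr_power_divide[OF pos(1), of q "m+1" 2, unfolded this(1)]
    and A_factor = powr_power_divide[OF pos(2), of r "m+1" "m+1", unfolded this(2)]
  have "det (hessian (comparison q r) x) =
          r^m * q * (A*(1-q)/2 + (1-A)*(1-q-r)) * (s powr (-q*p) * A powr (-r*p))"
    using det_hessian_comparison[OF x, of q r, folded s_def A_def m_def] q r
    by (simp only: s_factor A_factor mult.assoc)
  also have "\<dots> \<le> 1 * (s powr (-q*p) * A powr (-r*p))"
    using hessian_factor_le_one[OF q r pos(2) one_minus_norm2_le_one[of x, folded A_def]]
    by (intro mult_right_mono) auto
  also have "\<dots> = profile q r x powr (-p)"
    using pos by (simp add: profile_def powr_mult powr_powr flip: s_def A_def)
  also have "\<dots> \<le> \<bar>comparison q r x\<bar> powr (-p)"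
    using profile_powr_le_abs_comparison_powr[OF x \<open>comparison q r x < 0\<close>] \<open>0 < p\<close> by simp
  finally show ?thesis .
qed

lemma open_domain_below: "open (domain_below e :: (real^('m::finite+unit)) set)"
proof -
  have last: "continuous_on half_cylinder (\<lambda>x::real^('m+unit). x $ Inr ())"
    by (intro continuous_intros)
  have bound: "continuous_on half_cylinder (\<lambda>x::real^('m+unit). one_minus_norm2 x powr e)"
    unfolding one_minus_norm2_def
    by (intro continuous_intros) (auto simp: half_cylinder_def one_minus_norm2_def)
  have "\<exists>U. open U \<and> U \<inter> half_cylinder = (domain_below e :: (real^('m+unit)) set)"
    using open_Collect_less_Int[OF last bound] by (simp add: domain_below_def)
  then show ?thesis using open_half_cylinder by (metis open_Int)
qed

lemma comparison_neg_on_domain_below: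
  assumes x: "x \<in> domain_below e" and "q < 1" "e * (1-q) = r"
  shows "comparison q r x < 0"
proof -
  let ?s = "x $ Inr ()" and ?A = "one_minus_norm2 x"
  have s: "0 < ?s" and below: "?s < ?A powr e"
    using x by (auto simp: domain_below_def half_cylinder_def)
  have "?s powr (1-q) < (?A powr e) powr (1-q)"
    using s below \<open>q < 1\<close> by (intro powr_less_mono2) auto
  also have "\<dots> = ?A powr r" by (simp only: powr_powr assms(3))
  finally have root: "?s powr (1-q) < ?A powr r" .
  have "?s = ?s powr q * ?s powr (1-q)" using s by (simp flip: powr_add)
  also have "\<dots> < ?s powr q * ?A powr r" using s root by simp
  finally show ?thesis by (simp add: comparison_def profile_def)
qed

lemma closure_domain_below_subset:
  assumes "0 < e"
  shows "closure (domain_below e) \<subseteq>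
           {x. 0 \<le> x $ Inr () \<and> 0 \<le> one_minus_norm2 x \<and> x $ Inr () \<le> max 0 (one_minus_norm2 x) powr e}"
proof (rule closure_minimal)
  show "domain_below e \<subseteq> {x. 0 \<le> x $ Inr () \<and> 0 \<le> one_minus_norm2 x \<and>
          x $ Inr () \<le> max 0 (one_minus_norm2 x) powr e}"
    by (auto simp: domain_below_def half_cylinder_def)
  show "closed {x::real^('m::finite+unit). 0 \<le> x $ Inr () \<and> 0 \<le> one_minus_norm2 x \<and>
          x $ Inr () \<le> max 0 (one_minus_norm2 x) powr e}"
    unfolding one_minus_norm2_def
    by (intro closed_Collect_conj closed_Collect_le continuous_intros continuous_on_powr')
       (use assms in auto)
qed

lemma frontier_domain_below:
  assumes "0 < e" and x: "x \<in> frontier (domain_below e)"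
  shows "x $ Inr () = 0 \<or> (0 < one_minus_norm2 x \<and> x $ Inr () = one_minus_norm2 x powr e)"
proof -
  let ?s = "x $ Inr ()" and ?A = "one_minus_norm2 x"
  have "x \<in> closure (domain_below e)" "x \<notin> domain_below e"
    using x by (auto simp: frontier_def interior_open[OF open_domain_below])
  then have s: "0 \<le> ?s" and A: "0 \<le> ?A" and le: "?s \<le> ?A powr e"
    and not_below: "\<not> (0 < ?s \<and> 0 < ?A \<and> ?s < ?A powr e)"
    using closure_domain_below_subset[OF \<open>0 < e\<close>]
    by (auto simp: domain_below_def half_cylinder_def max_def)
  show ?thesis
  proof (cases "?s = 0")
    case False
    with s le have "0 < ?A" using A by (cases "?A = 0") auto
    with False s le not_below show ?thesis by auto
  qed simp
qed

lemma comparison_zero_on_frontier: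
  assumes "0 < e" "e * (1-q) = r" and x: "x \<in> frontier (domain_below e)"
  shows "comparison q r x = 0"
  using frontier_domain_below[OF \<open>0 < e\<close> x]
proof
  assume "0 < one_minus_norm2 x \<and> x $ Inr () = one_minus_norm2 x powr e"
  then have "profile q r x = one_minus_norm2 x powr (e*q + r)"
    by (simp add: profile_def powr_powr powr_add)
  also have "e*q + r = e" using assms(2) by (simp add: algebra_simps)
  finally show ?thesis
    using \<open>0 < one_minus_norm2 x \<and> _\<close> by (simp add: comparison_def)
qed (simp add: comparison_def profile_def)

theorem lemma4p1:
  fixes p :: real and \<Omega>1 :: "(real^('m::finite + unit)) set" and w :: "real^('m + unit) \<Rightarrow> real"
  defines "n \<equiv> real CARD('m + unit)"
  defines "\<Omega>1 \<equiv> {x. norm (xprime x) < 1 \<and> 0 < xlast x \<and>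
                     xlast x < (1 - norm (xprime x) ^ 2) powr (n / (n + p - 2))}"
  defines "w \<equiv> (\<lambda>x. (1/2) * (xlast x - xlast x powr (2 / (n + p)) *
                     (1 - norm (xprime x) ^ 2) powr (n / (n + p))))"
  assumes "p > 0"
  shows "smooth_on \<Omega>1 w \<and> (\<forall>x\<in>\<Omega>1. w x < 0) \<and> (\<forall>x\<in>frontier \<Omega>1. w x = 0) \<and>
         (\<forall>x\<in>\<Omega>1. det (hessian w x) \<le> \<bar>w x\<bar> powr (- p))"
proof -
  define q r e where "q = 2/(n+p)" and "r = n/(n+p)" and "e = n/(n+p-2)"
  have "n \<ge> 2" by (simp add: n_def)
  then have "n + p - 2 > 0" using \<open>p > 0\<close> by simp
  then have "q < 1" "0 < e" and "1 - q = (n+p-2)/(n+p)"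
    using \<open>n \<ge> 2\<close> by (simp_all add: q_def e_def field_simps)
  then have "e * (1-q) = r" using \<open>n + p - 2 > 0\<close> by (simp add: e_def r_def)
  have \<Omega>1: "\<Omega>1 = domain_below e"
    by (auto simp: \<Omega>1_def e_def domain_below_def half_cylinder_def xlast_def
        norm_xprime_less_one_iff one_minus_norm2_eq)
  have w: "w = comparison q r"
    by (simp add: w_def q_def r_def comparison_def profile_def xlast_def one_minus_norm2_eq fun_eq_iff)
  have sub: "domain_below e \<subseteq> half_cylinder" by (auto simp: domain_below_def)
  have neg: "w x < 0" if "x \<in> \<Omega>1" for x
    unfolding w using comparison_neg_on_domain_below[OF that[unfolded \<Omega>1] \<open>q < 1\<close> \<open>e * (1-q) = r\<close>] .
  have hess: "det (hessian w x) \<le> \<bar>w x\<bar> powr (- p)" if "x \<in> \<Omega>1" for x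
    using det_hessian_comparison_le[of x p] that sub neg[OF that] \<open>p > 0\<close>
    unfolding \<Omega>1 w q_def r_def n_def by blast
  have "smooth_on \<Omega>1 w" unfolding \<Omega>1 w by (rule smooth_on_comparison[OF sub open_domain_below])
  moreover have "w x = 0" if "x \<in> frontier \<Omega>1" for x
    unfolding w by (rule comparison_zero_on_frontier[OF \<open>0 < e\<close> \<open>e * (1-q) = r\<close> that[unfolded \<Omega>1]])
  ultimately show ?thesis using neg hess by blast
qed

end
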